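(* Let a power network have node set $V$, initial active link set $\mathcal{E}^0$, link weights $w\in\mathbb{R}_{\ge0}^{\mathcal{E}^0}$, link capacities $c\in\mathbb{R}_{\ge0}^{\mathcal{E}^0}$, initial balanced supply-demand vector $p^0\in\mathcal{B}_{\mathcal{E}^0}$ and horizon $N\ge1$. Then for every $\epsilon>0$ there exists a feasible control sequence $\tilde u=(\tilde u^0,\dots,\tilde u^{N-1})\in\mathcal{D}(\mathcal{E}^0,p^0,N)$ such that $$\mathbb{J}_N(\mathcal{E}^0,\{p^0\})\ \ge\ s^\top\tilde u^{N-1}\ \ge\ \mathbb{J}_N(\mathcal{E}^0,\{p^0\})-\epsilon.$$
   Context: Network model. The network is a finite undirected multigraph with node set $V$ and link set $\mathcal{E}^0$ (arbitrary reference orientation of links). For $\mathcal{E}\subseteq\mathcal{E}^0$, let $A$ be the node–link incidence matrix of $(V,\mathcal{E})$, $W=\mathrm{diag}(w_i)_{i\in\mathcal{E}}$, $L(\mathcal{E})=AWA^\top$ with pseudo-inverse $L^\dagger(\mathcal{E})$. $\mathcal{B}_{\mathcal{E}}=\{u\in\mathbb{R}^V:\sum_{v\in V^{(i)}}u_v=0$ for every connected component $V^{(i)}$ of $(V,\mathcal{E})\}$. For $p\in\mathcal{B}_{\mathcal{E}}$, $f(\mathcal{E},p)=WA^\top L^\dagger(\mathcal{E})p$. $s\in\{1,0,-1\}^V$ equals $1$ on supply nodes, $-1$ on demand nodes, $0$ on other nodes. $\mathrm{sign}(x)=1$ if $x\ge0$, $-1$ otherwise; $\mathrm{cube}(p)=\{u\in\mathbb{R}^V:0\le\mathrm{sign}(p_v)u_v\le|p_v|\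 \forall v\}$, $\mathrm{cube}(P)=\bigcup_{p\in P}\mathrm{cube}(p)$; $U(\mathcal{E},p)=\mathrm{cube}(p)\cap\mathcal{B}_{\mathcal{E}}$, $U(\mathcal{E},P)=\mathcal{B}_{\mathcal{E}}\cap\mathrm{cube}(P)$. $\mathcal{F}_{\mathcal{E}}(\mathcal{E},u)=\{i\in\mathcal{E}:|f_i(\mathcal{E},u)|\le c_i\}$. Feasible states: $\mathcal{S}=\{(\mathcal{E},p):p\in\mathcal{B}_{\mathcal{E}},|f_i(\mathcal{E},p)|\le c_i\ \forall i\in\mathcal{E}\}$. Controlled cascade: $\mathcal{E}^{t+1}=\mathcal{F}_{\mathcal{E}}(\mathcal{E}^t,u^t)$, $p^{t+1}=u^t$, $u^t\in U(\mathcal{E}^t,p^t)$. $\mathcal{D}(\mathcal{E}^0,p^0,N)$ is the set of sequences $(u^0,\dots,u^{N-1})$ with $u^t\in U(\mathcal{E}^t,p^t)$ for $t=0,\dots,N-1$ and $(\mathcal{E}^{N-1},u^{N-1})\in\mathcal{S}$, where $(\mathcal{E}^t,p^t)$ are generated by the cascade. Aggregation: for $\beta\in\{-1,0,1\}^{\mathcal{E}}$, $U(\mathcal{E},P,\beta)=\{u\in U(\mathcal{E},P): f_i(\mathcal{E},u)<-c_i$ if $\beta_i=-1$; $|f_i(\mathcal{E},u)|\le c_i$ if $\beta_i=0$; $f_i(\mathcal{E},u)>c_i$ if $\beta_i=1\}$; $\mathbb{U}(\mathcal{E},P)$ is the collection of nonempty $U(\mathcal{E},P,\beta)$. $\mathcal{F}_{\mathcal{E}}(\mathcal{E},U)=\{i\in\mathcal{E}:|f_i(\mathcal{E},u)|\le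 c_i\ \forall u\in U\}$. $\mathbb{J}_1(\mathcal{E},P)=\max\{s^\top u:u\in U(\mathcal{E},\mathrm{cl}\,P),\ |f_i(\mathcal{E},u)|\le c_i\ \forall i\in\mathcal{E}\}$ and $\mathbb{J}_{t+1}(\mathcal{E},P)=\max_{U\in\mathbb{U}(\mathcal{E},P)}\mathbb{J}_t(\mathcal{F}_{\mathcal{E}}(\mathcal{E},U),U)$ for $t\in\{1,\dots,N-1\}$. *)

theory Defs
  imports "HOL-Analysis.Analysis"
begin

text \<open>Vectors in R^V are functions
  'v => real (taken to vanish outside V where they represent elements of B_E).\<close>

record ('v, 'e) net =
  nodes  :: "'v set"
  tail   :: "'e \<Rightarrow> 'v"
  head   :: "'e \<Rightarrow> 'v"
  weight :: "'e \<Rightarrow> real"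
  cap    :: "'e \<Rightarrow> real"

definition inc :: "('v, 'e) net \<Rightarrow> 'v \<Rightarrow> 'e \<Rightarrow> real" where
  "inc G v i = (if v = tail G i then 1 else 0) - (if v = head G i then 1 else 0)"

definition lap :: "('v, 'e) net \<Rightarrow> 'e set \<Rightarrow> 'v \<Rightarrow> 'v \<Rightarrow> real" where
  "lap G E u v = (\<Sum>i\<in>E. inc G u i * weight G i * inc G v i)"

definition mmul :: "'v set \<Rightarrow> ('v \<Rightarrow> 'v \<Rightarrow> real) \<Rightarrow> ('v \<Rightarrow> 'v \<Rightarrow> real) \<Rightarrow> 'v \<Rightarrow> 'v \<Rightarrow> real" where
  "mmul V X Y = (\<lambda>u v. \<Sum>k\<in>V. X u k * Y k v)"

definition is_pinv :: "'v set \<Rightarrow> ('v \<Rightarrow> 'v \<Rightarrow> real) \<Rightarrow> ('v \<Rightarrow> 'v \<Rightarrow> real) \<Rightarrow> bool" where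
  "is_pinv V L X \<longleftrightarrow>
     (\<forall>u v. u \<notin> V \<or> v \<notin> V \<longrightarrow> X u v = 0) \<and>
     (\<forall>u\<in>V. \<forall>v\<in>V.
        mmul V (mmul V L X) L u v = L u v \<and>
        mmul V (mmul V X L) X u v = X u v \<and>
        mmul V L X u v = mmul V L X v u \<and>
        mmul V X L u v = mmul V X L v u)"

definition pinv :: "'v set \<Rightarrow> ('v \<Rightarrow> 'v \<Rightarrow> real) \<Rightarrow> 'v \<Rightarrow> 'v \<Rightarrow> real" where
  "pinv V L = (THE X. is_pinv V L X)"

definition flow :: "('v, 'e) net \<Rightarrow> 'e set \<Rightarrow> ('v \<Rightarrow> real) \<Rightarrow> 'e \<Rightarrow> real" where
  "flow G E p i = weight G i *
     (\<Sum>v\<in>nodes G. inc G v i * (\<Sum>x\<in>nodes G. pinv (nodes G) (lap G E) v x * p x))"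

definition adj :: "('v, 'e) net \<Rightarrow> 'e set \<Rightarrow> ('v \<times> 'v) set" where
  "adj G E = {(tail G i, head G i) | i. i \<in> E} \<union> {(head G i, tail G i) | i. i \<in> E}"

definition comp :: "('v, 'e) net \<Rightarrow> 'e set \<Rightarrow> 'v \<Rightarrow> 'v set" where
  "comp G E v = {x \<in> nodes G. (v, x) \<in> (adj G E)\<^sup>*}"

definition balanced :: "('v, 'e) net \<Rightarrow> 'e set \<Rightarrow> ('v \<Rightarrow> real) set" where
  "balanced G E = {u. (\<forall>x. x \<notin> nodes G \<longrightarrow> u x = 0) \<and>
                       (\<forall>v\<in>nodes G. (\<Sum>x\<in>comp G E v. u x) = 0)}"

definition sgn' :: "real \<Rightarrow> real" where
  "sgn' x = (if x \<ge> 0 then 1 else -1)"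

definition cube :: "('v, 'e) net \<Rightarrow> ('v \<Rightarrow> real) \<Rightarrow> ('v \<Rightarrow> real) set" where
  "cube G p = {u. \<forall>v\<in>nodes G. 0 \<le> sgn' (p v) * u v \<and> sgn' (p v) * u v \<le> \<bar>p v\<bar>}"

definition cubeS :: "('v, 'e) net \<Rightarrow> ('v \<Rightarrow> real) set \<Rightarrow> ('v \<Rightarrow> real) set" where
  "cubeS G P = (\<Union>p\<in>P. cube G p)"

definition Uctl :: "('v, 'e) net \<Rightarrow> 'e set \<Rightarrow> ('v \<Rightarrow> real) \<Rightarrow> ('v \<Rightarrow> real) set" where
  "Uctl G E p = cube G p \<inter> balanced G E"

definition UctlS :: "('v, 'e) net \<Rightarrow> 'e set \<Rightarrow> ('v \<Rightarrow> real) set \<Rightarrow> ('v \<Rightarrow> real) set" where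
  "UctlS G E P = balanced G E \<inter> cubeS G P"

definition FE :: "('v, 'e) net \<Rightarrow> 'e set \<Rightarrow> ('v \<Rightarrow> real) \<Rightarrow> 'e set" where
  "FE G E u = {i \<in> E. \<bar>flow G E u i\<bar> \<le> cap G i}"

definition feasible :: "('v, 'e) net \<Rightarrow> 'e set \<Rightarrow> ('v \<Rightarrow> real) \<Rightarrow> bool" where
  "feasible G E p \<longleftrightarrow> p \<in> balanced G E \<and> (\<forall>i\<in>E. \<bar>flow G E p i\<bar> \<le> cap G i)"

primrec casc :: "('v, 'e) net \<Rightarrow> 'e set \<Rightarrow> ('v \<Rightarrow> real) \<Rightarrow> (nat \<Rightarrow> 'v \<Rightarrow> real)
                  \<Rightarrow> nat \<Rightarrow> 'e set \<times> ('v \<Rightarrow> real)" where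
  "casc G E0 p0 u 0 = (E0, p0)"
| "casc G E0 p0 u (Suc t) = (FE G (fst (casc G E0 p0 u t)) (u t), u t)"

text \<open>Feasible control sequences D(E0,p0,N) (only u 0 .. u (N-1) matter).\<close>
definition Dctl :: "('v, 'e) net \<Rightarrow> 'e set \<Rightarrow> ('v \<Rightarrow> real) \<Rightarrow> nat \<Rightarrow> (nat \<Rightarrow> 'v \<Rightarrow> real) set" where
  "Dctl G E0 p0 N = {u. (\<forall>t<N. u t \<in> Uctl G (fst (casc G E0 p0 u t)) (snd (casc G E0 p0 u t))) \<and>
                        feasible G (fst (casc G E0 p0 u (N - 1))) (u (N - 1))}"

definition UB :: "('v, 'e) net \<Rightarrow> 'e set \<Rightarrow> ('v \<Rightarrow> real) set \<Rightarrow> ('e \<Rightarrow> int) \<Rightarrow> ('v \<Rightarrow> real) set" where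
  "UB G E P \<beta> = {u \<in> UctlS G E P. \<forall>i\<in>E.
       (\<beta> i = -1 \<longrightarrow> flow G E u i < - cap G i) \<and>
       (\<beta> i = 0 \<longrightarrow> \<bar>flow G E u i\<bar> \<le> cap G i) \<and>
       (\<beta> i = 1 \<longrightarrow> flow G E u i > cap G i)}"

definition UU :: "('v, 'e) net \<Rightarrow> 'e set \<Rightarrow> ('v \<Rightarrow> real) set \<Rightarrow> ('v \<Rightarrow> real) set set" where
  "UU G E P = {UB G E P \<beta> | \<beta>. (\<forall>i\<in>E. \<beta> i \<in> {-1, 0, 1}) \<and> UB G E P \<beta> \<noteq> {}}"

definition FEU :: "('v, 'e) net \<Rightarrow> 'e set \<Rightarrow> ('v \<Rightarrow> real) set \<Rightarrow> 'e set" where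
  "FEU G E U = {i \<in> E. \<forall>u\<in>U. \<bar>flow G E u i\<bar> \<le> cap G i}"

definition sdot :: "('v, 'e) net \<Rightarrow> ('v \<Rightarrow> real) \<Rightarrow> ('v \<Rightarrow> real) \<Rightarrow> real" where
  "sdot G s u = (\<Sum>v\<in>nodes G. s v * u v)"

definition J1 :: "('v, 'e) net \<Rightarrow> ('v \<Rightarrow> real) \<Rightarrow> 'e set \<Rightarrow> ('v \<Rightarrow> real) set \<Rightarrow> real" where
  "J1 G s E P = Sup (sdot G s ` {u \<in> UctlS G E (closure P). \<forall>i\<in>E. \<bar>flow G E u i\<bar> \<le> cap G i})"

text \<open>JJ G s t E P = J_t(E,P) for t \<ge> 1 (the value at t = 0 is unused).\<close>
fun JJ :: "('v, 'e) net \<Rightarrow> ('v \<Rightarrow> real) \<Rightarrow> nat \<Rightarrow> 'e set \<Rightarrow> ('v \<Rightarrow> real) set \<Rightarrow> real" where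
  "JJ G s 0 E P = 0"
| "JJ G s (Suc 0) E P = J1 G s E P"
| "JJ G s (Suc (Suc t)) E P = Max ((\<lambda>U. JJ G s (Suc t) (FEU G E U) U) ` UU G E P)"

end

theory Submission
  imports Defs
begin

text \<open>J_1(E, P) is a supremum over feasible injections u in the cube of closure P, and a
  near-optimal u lies in the cube of a limit point q of P. Flows are linear in the injection, so
  l * u with 0 < l < 1 is still balanced and feasible, and it lies in the cube of every point of P
  close enough to q; for l near 1 this loses at most (1 - l) |s^T u| of the objective.
  For longer horizons J_{t+1} is a maximum over finitely many cells U, and every control in a
  cell leaves exactly the links FEU(U) active; so a near-optimal control sequence for the
  maximizing cell, prefixed by its own starting point, is near-optimal for the whole horizon.\<close>

lemma flow_cmult: "flow G E (\<lambda>v. l * u v) i = l * flow G E u i"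
  unfolding flow_def by (simp add: sum_distrib_left sum_distrib_right algebra_simps)

lemma sdot_cmult: "sdot G s (\<lambda>v. l * u v) = l * sdot G s u"
  unfolding sdot_def by (simp add: sum_distrib_left algebra_simps)

lemma balanced_cmult: "u \<in> balanced G E \<Longrightarrow> (\<lambda>v. l * u v) \<in> balanced G E"
  unfolding balanced_def by (simp add: sum_distrib_left[symmetric])

lemma feasible_cmult:
  assumes "feasible G E u" "0 \<le> l" "l \<le> 1"
  shows "feasible G E (\<lambda>v. l * u v)"
proof -
  have "\<bar>flow G E (\<lambda>v. l * u v) i\<bar> \<le> \<bar>flow G E u i\<bar>" for i
    using assms(2,3) by (simp add: flow_cmult abs_mult mult_left_le_one_le)
  then show ?thesis
    using assms(1) by (auto simp: feasible_def balanced_cmult intro: order_trans)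
qed

lemma feasible_zero: "\<forall>i\<in>E. cap G i \<ge> 0 \<Longrightarrow> feasible G E (\<lambda>v. 0)"
  by (simp add: feasible_def balanced_def flow_def)

lemma cube_coord_iff: "(0 \<le> sgn' a * x \<and> sgn' a * x \<le> \<bar>a\<bar>) \<longleftrightarrow> min 0 a \<le> x \<and> x \<le> max 0 a"
  by (auto simp: sgn'_def)

lemma cube_abs_le: "u \<in> cube G q \<Longrightarrow> v \<in> nodes G \<Longrightarrow> \<bar>u v\<bar> \<le> \<bar>q v\<bar>"
  unfolding cube_def cube_coord_iff by fastforce

lemma cubeS_abs_le:
  "u \<in> cubeS G P \<Longrightarrow> \<forall>q\<in>P. \<forall>v\<in>nodes G. \<bar>q v\<bar> \<le> b v \<Longrightarrow> v \<in> nodes G \<Longrightarrow> \<bar>u v\<bar> \<le> b v"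
  unfolding cubeS_def by (fastforce dest: cube_abs_le)

lemma cmult_between_perturbed:
  fixes a b x l :: real
  assumes x: "min 0 a \<le> x" "x \<le> max 0 a" and l: "0 < l" "l \<le> 1"
    and near: "a = 0 \<or> \<bar>b - a\<bar> < (1 - l) * \<bar>a\<bar>"
  shows "min 0 b \<le> l * x \<and> l * x \<le> max 0 b"
proof (cases a "0::real" rule: linorder_cases)
  case less
  then have "b < l * a" "l * a \<le> l * x" "l * x \<le> 0"
    using x l near by (auto simp: mult_le_0_iff algebra_simps)
  then show ?thesis by linarith
next
  case equal
  then show ?thesis using x by simp
next
  case greater
  then have "l * a < b" "l * x \<le> l * a" "0 \<le> l * x"
    using x l near by (auto simp: algebra_simps)
  then show ?thesis by linarith
qed

lemma cmult_in_cube_nearby: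
  assumes "u \<in> cube G q" "0 < l" "l \<le> 1"
    and "\<forall>v\<in>nodes G. q v = 0 \<or> \<bar>q' v - q v\<bar> < (1 - l) * \<bar>q v\<bar>"
  shows "(\<lambda>v. l * u v) \<in> cube G q'"
  using assms cmult_between_perturbed[of "q v" "u v" l "q' v" for v]
  unfolding cube_def cube_coord_iff by blast

lemma closed_coordinate_box: "closed {q :: 'v \<Rightarrow> real. \<forall>v\<in>V. \<bar>q v\<bar> \<le> b v}"
proof -
  have "closed {q :: 'v \<Rightarrow> real. \<bar>q v\<bar> \<le> b v}" for v
    by (intro closed_Collect_le continuous_intros continuous_on_product_coordinates)
  then have "closed (\<Inter>v\<in>V. {q :: 'v \<Rightarrow> real. \<bar>q v\<bar> \<le> b v})" by blast
  moreover have "(\<Inter>v\<in>V. {q :: 'v \<Rightarrow> real. \<bar>q v\<bar> \<le> b v}) = {q. \<forall>v\<in>V. \<bar>q v\<bar> \<le> b v}" by auto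
  ultimately show ?thesis by simp
qed

lemma open_coordinate_box:
  assumes "finite V"
  shows "open {f :: 'v \<Rightarrow> real. \<forall>v\<in>V. \<bar>f v - q v\<bar> < r v}"
proof -
  have "open {f :: 'v \<Rightarrow> real. \<bar>f v - q v\<bar> < r v}" for v
    by (intro open_Collect_less continuous_intros continuous_on_product_coordinates)
  then have "open (\<Inter>v\<in>V. {f :: 'v \<Rightarrow> real. \<bar>f v - q v\<bar> < r v})"
    using assms by (simp add: open_INT)
  moreover have "(\<Inter>v\<in>V. {f :: 'v \<Rightarrow> real. \<bar>f v - q v\<bar> < r v}) = {f. \<forall>v\<in>V. \<bar>f v - q v\<bar> < r v}"
    by auto
  ultimately show ?thesis by simp
qed

lemma closure_coordinate_box:
  fixes P :: "('v \<Rightarrow> real) set"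
  assumes "\<forall>q\<in>P. \<forall>v\<in>V. \<bar>q v\<bar> \<le> b v"
  shows "\<forall>q\<in>closure P. \<forall>v\<in>V. \<bar>q v\<bar> \<le> b v"
  using closure_minimal[OF _ closed_coordinate_box, of P V b] assms by blast

lemma closure_coordinatewise_approx:
  fixes P :: "('v \<Rightarrow> real) set"
  assumes "finite V" "q \<in> closure P" "\<forall>v\<in>V. r v > 0"
  obtains q' where "q' \<in> P" "\<forall>v\<in>V. \<bar>q' v - q v\<bar> < r v"
proof -
  let ?T = "{f. \<forall>v\<in>V. \<bar>f v - q v\<bar> < r v}"
  have "open ?T" "q \<in> ?T"
    using open_coordinate_box[OF assms(1)] assms(3) by auto
  then have "P \<inter> ?T \<noteq> {}"
    using assms(2) closure_iff_nhds_not_empty by blast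
  then show ?thesis using that by blast
qed

lemma cmult_in_cubeS:
  assumes fin: "finite (nodes G)" and u: "u \<in> cubeS G (closure P)" and l: "0 < l" "l < 1"
  shows "(\<lambda>v. l * u v) \<in> cubeS G P"
proof -
  obtain q where q: "q \<in> closure P" "u \<in> cube G q"
    using u by (auto simp: cubeS_def)
  \<comment> \<open>Where q v = 0 the cube forces u v = 0, so any positive radius does.\<close>
  define r where "r v = (if q v = 0 then 1 else (1 - l) * \<bar>q v\<bar>)" for v
  have "\<forall>v\<in>nodes G. r v > 0" using l by (simp add: r_def)
  then obtain q' where "q' \<in> P" "\<forall>v\<in>nodes G. \<bar>q' v - q v\<bar> < r v"
    using closure_coordinatewise_approx[OF fin q(1)] by blast
  moreover have "(\<lambda>v. l * u v) \<in> cube G q'"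
    using calculation(2) l by (intro cmult_in_cube_nearby[OF q(2)]) (auto simp: r_def split: if_splits)
  ultimately show ?thesis by (auto simp: cubeS_def)
qed

lemma JJ_one_eq_Sup: "JJ G s (Suc 0) E P = Sup (sdot G s ` {u \<in> cubeS G (closure P). feasible G E u})"
  unfolding JJ.simps J1_def
  by (rule arg_cong[where f = "\<lambda>X. Sup (sdot G s ` X)"]) (auto simp: UctlS_def feasible_def)

lemma bdd_above_sdot_cubeS:
  assumes "\<forall>q\<in>P. \<forall>v\<in>nodes G. \<bar>q v\<bar> \<le> b v"
  shows "bdd_above (sdot G s ` cubeS G P)"
proof (rule bdd_aboveI2)
  fix u assume u: "u \<in> cubeS G P"
  have "s v * u v \<le> \<bar>s v\<bar> * b v" if v: "v \<in> nodes G" for v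
  proof -
    have "s v * u v \<le> \<bar>s v\<bar> * \<bar>u v\<bar>" by (simp add: abs_mult[symmetric])
    also have "\<dots> \<le> \<bar>s v\<bar> * b v" using cubeS_abs_le[OF u assms v] by (simp add: mult_left_mono)
    finally show ?thesis .
  qed
  then show "sdot G s u \<le> (\<Sum>v\<in>nodes G. \<bar>s v\<bar> * b v)"
    unfolding sdot_def by (intro sum_mono) auto
qed

lemma exists_shrink_factor:
  fixes c e :: real
  assumes "0 \<le> c" "0 < e"
  obtains l where "0 < l" "l < 1" "(1 - l) * c \<le> e"
proof
  let ?d = "min (1/2) (e / (c + 1))"
  show "0 < 1 - ?d" "1 - ?d < 1" using assms by auto
  have "?d * c \<le> e / (c + 1) * c" using assms by (intro mult_right_mono) auto
  also have "\<dots> \<le> e" using assms by (simp add: field_simps)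
  finally show "(1 - (1 - ?d)) * c \<le> e" by simp
qed

lemma Dctl_one_iff: "w \<in> Dctl G E q (Suc 0) \<longleftrightarrow> w 0 \<in> Uctl G E q \<and> feasible G E (w 0)"
  by (simp add: Dctl_def)

lemma JJ_one_nearly_attained:
  assumes fin: "finite (nodes G)" and cap: "\<forall>i\<in>E. cap G i \<ge> 0" and "P \<noteq> {}"
    and box: "\<forall>q\<in>P. \<forall>v\<in>nodes G. \<bar>q v\<bar> \<le> b v" and "\<epsilon> > 0"
  shows "\<exists>q\<in>P. \<exists>w\<in>Dctl G E q (Suc 0).
           JJ G s (Suc 0) E P \<ge> sdot G s (w 0) \<and> sdot G s (w 0) \<ge> JJ G s (Suc 0) E P - \<epsilon>"
proof -
  define F where "F = {u \<in> cubeS G (closure P). feasible G E u}"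
  have J: "JJ G s (Suc 0) E P = Sup (sdot G s ` F)"
    unfolding F_def by (rule JJ_one_eq_Sup)
  have bdd: "bdd_above (sdot G s ` F)"
    using bdd_above_sdot_cubeS[OF closure_coordinate_box[OF box]]
    by (rule bdd_above_mono) (auto simp: F_def)
  have "(\<lambda>v. 0) \<in> F"
    using \<open>P \<noteq> {}\<close> closure_subset feasible_zero[OF cap]
    by (fastforce simp: F_def cubeS_def cube_def)
  then obtain u where uF: "u \<in> F" and u: "Sup (sdot G s ` F) - \<epsilon>/2 < sdot G s u"
    using less_cSup_iff[OF _ bdd, of "Sup (sdot G s ` F) - \<epsilon>/2"] \<open>\<epsilon> > 0\<close> by fastforce
  obtain l where l: "0 < l" "l < 1" "(1 - l) * \<bar>sdot G s u\<bar> \<le> \<epsilon>/2"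
    using exists_shrink_factor[of "\<bar>sdot G s u\<bar>" "\<epsilon>/2"] \<open>\<epsilon> > 0\<close> by auto
  define w where "w = (\<lambda>_::nat. \<lambda>v. l * u v)"
  have "w 0 \<in> cubeS G P"
    using uF l by (simp add: w_def F_def cmult_in_cubeS[OF fin])
  then obtain q where q: "q \<in> P" "w 0 \<in> cube G q" by (auto simp: cubeS_def)
  have feas: "feasible G E (w 0)"
    using uF l by (simp add: w_def F_def feasible_cmult)
  then have "w \<in> Dctl G E q (Suc 0)"
    using q(2) by (simp add: Dctl_one_iff Uctl_def feasible_def)
  moreover have "sdot G s (w 0) \<le> Sup (sdot G s ` F)"
    using q feas closure_subset by (intro cSup_upper bdd) (auto simp: F_def cubeS_def)
  moreover have "sdot G s u - \<epsilon>/2 \<le> sdot G s (w 0)"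
  proof -
    have "sdot G s u - sdot G s (w 0) = (1 - l) * sdot G s u"
      by (simp add: w_def sdot_cmult algebra_simps)
    also have "\<dots> \<le> (1 - l) * \<bar>sdot G s u\<bar>" using l by (simp add: mult_left_mono)
    finally show ?thesis using l by linarith
  qed
  ultimately show ?thesis using q(1) u unfolding J by force
qed

lemma UB_restrict: "UB G E P (restrict \<beta> E) = UB G E P \<beta>"
  unfolding UB_def by auto

lemma finite_UU: "finite E \<Longrightarrow> finite (UU G E P)"
proof -
  assume "finite E"
  have "UU G E P \<subseteq> UB G E P ` (PiE E (\<lambda>_. {-1, 0, 1}))"
    unfolding UU_def using UB_restrict by (fastforce intro!: image_eqI[of _ _ "restrict _ E"])
  moreover have "finite (PiE E (\<lambda>_. {-1 :: int, 0, 1}))"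
    using \<open>finite E\<close> by (intro finite_PiE) auto
  ultimately show ?thesis by (meson finite_imageI finite_subset)
qed

lemma UU_nonempty:
  fixes G :: "('v, 'e) net"
  shows "P \<noteq> {} \<Longrightarrow> UU G E P \<noteq> {}"
proof -
  assume "P \<noteq> {}"
  then have zero: "(\<lambda>v. 0) \<in> UctlS G E P"
    by (auto simp: UctlS_def cubeS_def cube_def balanced_def)
  define \<beta> :: "'e \<Rightarrow> int" where
    "\<beta> i = (if flow G E (\<lambda>v. 0) i < - cap G i then -1
            else if flow G E (\<lambda>v. 0) i > cap G i then 1 else 0)" for i
  have "(\<lambda>v. 0) \<in> UB G E P \<beta>" using zero by (auto simp: UB_def \<beta>_def)
  moreover have "\<forall>i\<in>E. \<beta> i \<in> {-1, 0, 1}" by (simp add: \<beta>_def)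
  ultimately have "UB G E P \<beta> \<in> UU G E P" unfolding UU_def by blast
  then show ?thesis by auto
qed

lemma JJ_Suc_Suc_attained:
  assumes "finite E" "P \<noteq> {}"
  obtains U where "U \<in> UU G E P" "JJ G s (Suc (Suc t)) E P = JJ G s (Suc t) (FEU G E U) U"
proof -
  let ?f = "\<lambda>U. JJ G s (Suc t) (FEU G E U) U"
  have "Max (?f ` UU G E P) \<in> ?f ` UU G E P"
    using finite_UU[OF assms(1)] UU_nonempty[OF assms(2)] by (intro Max_in) auto
  then show ?thesis using that by auto
qed

lemma UU_subset: "U \<in> UU G E P \<Longrightarrow> U \<subseteq> UctlS G E P"
  by (auto simp: UU_def UB_def)

lemma FE_eq_FEU_UU:
  assumes "U \<in> UU G E P" "q \<in> U"
  shows "FE G E q = FEU G E U"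
proof -
  obtain \<beta> where \<beta>: "U = UB G E P \<beta>" "\<forall>i\<in>E. \<beta> i \<in> {-1, 0, 1}"
    using assms(1) by (auto simp: UU_def)
  have "\<beta> i = 0" if "i \<in> E" "\<bar>flow G E q i\<bar> \<le> cap G i" for i
    using \<beta> assms(2) that by (auto simp: UB_def)
  then show ?thesis
    using \<beta>(1) assms(2) by (auto simp: FE_def FEU_def UB_def)
qed

lemma casc_case_nat:
  "casc G E q (case_nat q' w) (Suc k) = casc G (FE G E q') q' w k"
  by (induction k) auto

lemma Dctl_case_nat:
  assumes "q' \<in> Uctl G E q" "w \<in> Dctl G (FE G E q') q' N" "N \<ge> 1"
  shows "case_nat q' w \<in> Dctl G E q (Suc N)"
proof -
  have "case_nat q' w k \<in> Uctl G (fst (casc G E q (case_nat q' w) k)) (snd (casc G E q (case_nat q' w) k))"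
    if "k < Suc N" for k
  proof (cases k)
    case (Suc j)
    then show ?thesis
      using that assms(2) unfolding Suc Dctl_def casc_case_nat by simp
  qed (use assms(1) in simp)
  moreover have "feasible G (fst (casc G E q (case_nat q' w) N)) (case_nat q' w N)"
    using assms(2,3) unfolding Dctl_def by (cases N) (simp_all only: casc_case_nat, simp_all)
  ultimately show ?thesis by (simp add: Dctl_def)
qed

lemma JJ_nearly_attained:
  assumes fin: "finite (nodes G)" and "\<epsilon> > 0" and "finite E" and "\<forall>i\<in>E. cap G i \<ge> 0"
    and "P \<noteq> {}" and "\<forall>q\<in>P. \<forall>v\<in>nodes G. \<bar>q v\<bar> \<le> b v"
  shows "\<exists>q\<in>P. \<exists>w\<in>Dctl G E q (Suc t).
           JJ G s (Suc t) E P \<ge> sdot G s (w t) \<and> sdot G s (w t) \<ge> JJ G s (Suc t) E P - \<epsilon>"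
  using assms(3-6)
proof (induction t arbitrary: E P)
  case 0
  then show ?case using JJ_one_nearly_attained[OF fin _ _ _ \<open>\<epsilon> > 0\<close>] by blast
next
  case (Suc t)
  obtain U where U: "U \<in> UU G E P" and J: "JJ G s (Suc (Suc t)) E P = JJ G s (Suc t) (FEU G E U) U"
    using JJ_Suc_Suc_attained[OF Suc.prems(1,3)] .
  have "FEU G E U \<subseteq> E" by (auto simp: FEU_def)
  moreover have "U \<noteq> {}" using U by (auto simp: UU_def)
  moreover have "\<forall>q\<in>U. \<forall>v\<in>nodes G. \<bar>q v\<bar> \<le> b v"
    using UU_subset[OF U] Suc.prems(4) by (auto simp: UctlS_def intro: cubeS_abs_le)
  ultimately obtain q' w where q': "q' \<in> U" and w: "w \<in> Dctl G (FEU G E U) q' (Suc t)"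
    and bounds: "JJ G s (Suc t) (FEU G E U) U \<ge> sdot G s (w t)"
      "sdot G s (w t) \<ge> JJ G s (Suc t) (FEU G E U) U - \<epsilon>"
    using Suc.IH[of "FEU G E U" U] Suc.prems(1,2) by (meson finite_subset subsetD)
  obtain q where q: "q \<in> P" "q' \<in> Uctl G E q"
    using UU_subset[OF U] q' by (auto simp: UctlS_def cubeS_def Uctl_def)
  have "case_nat q' w \<in> Dctl G E q (Suc (Suc t))"
    using Dctl_case_nat[OF q(2)] w FE_eq_FEU_UU[OF U q'] by simp
  then show ?case
    using q(1) bounds J by (intro bexI[of _ q] bexI[of _ "case_nat q' w"]) auto
qed

theorem proposition4:
  fixes G :: "('v, 'e) net" and E0 :: "'e set" and p0 :: "'v \<Rightarrow> real"
    and s :: "'v \<Rightarrow> real" and N :: nat and \<epsilon> :: real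
  assumes "finite (nodes G)" and "finite E0"
    and "\<forall>i\<in>E0. tail G i \<in> nodes G \<and> head G i \<in> nodes G"
    and "\<forall>i\<in>E0. weight G i \<ge> 0" and "\<forall>i\<in>E0. cap G i \<ge> 0"
    and "\<forall>v\<in>nodes G. s v \<in> {-1, 0, 1}"
    and "p0 \<in> balanced G E0"
    and "N \<ge> 1"
    and "\<epsilon> > 0"
  shows "\<exists>u \<in> Dctl G E0 p0 N.
           JJ G s N E0 {p0} \<ge> sdot G s (u (N - 1)) \<and>
           sdot G s (u (N - 1)) \<ge> JJ G s N E0 {p0} - \<epsilon>"
proof -
  obtain t where N: "N = Suc t" using \<open>N \<ge> 1\<close> by (cases N) auto
  have "\<exists>q\<in>{p0}. \<exists>w\<in>Dctl G E0 q (Suc t).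
      JJ G s (Suc t) E0 {p0} \<ge> sdot G s (w t) \<and> sdot G s (w t) \<ge> JJ G s (Suc t) E0 {p0} - \<epsilon>"
    using assms(1,2,5,9) by (intro JJ_nearly_attained[where b = "\<lambda>v. \<bar>p0 v\<bar>"]) auto
  then show ?thesis using N by simp
qed

end
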